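(* Let $(A,* )$ be an involutive associative algebra, $(M,* )$ an involutive $A$-bimodule, and $T:M\to A$ a relative Rota-Baxter operator on $A$ with respect to $M$. If $iH^2_T(M,A)=0$, then every finite order deformation of $T$ extends to a deformation of next order.
   Context: An involutive associative algebra is an associative algebra $A$ with a linear map $*:A\to A$ satisfying $a^{**}=a$ and $(ab)^*=b^*a^*$; an involutive $A$-bimodule is an $A$-bimodule $M$ with $*:M\to M$, $u^{**}=u$, $(au)^*=u^*a^*$, $(ua)^*=a^*u^*$. A relative Rota-Baxter operator is a linear $T:M\to A$ with $T(u^* )=T(u)^*$ and $T(u)T(v)=T(uT(v)+T(u)v)$. Notation: $u\circledast v=uT(v)+T(u)v$, $l_T(u,a)=T(u)a-T(ua)$, $r_T(a,u)=aT(u)-T(au)$. Let $i\mathrm{Hom}(M^{\otimes0},A)=\{a\in A\mid a^*=-a\}$ and for $n\ge1$ $i\mathrm{Hom}(M^{\otimes n},A)=\{f\mid f(u_1,\ldots,u_n)^*=(-1)^{\frac{(n-1)(n-2)}{2}}f(u_n^*,\ldots,u_1^* )\}$. Differential: $d_T(a)(u)=l_T(u,a)-r_T(a,u)$, and for $n\ge1$, $(d_Tf)(u_1,\ldots,u_{n+1})=(-1)^n\big[l_T(u_1,f(u_2,\ldots,u_{n+1}))+\sum_{i=1}^n(-1)^if(u_1,\ldots,u_i\circledast u_{i+1},\ldots,u_{n+1})+(-1)^{n+1}r_T(f(u_1,\ldots,u_n),u_{n+1})\big]$; $iH^\bullet_T(M,A)$ is the cohomology of $(i\mathrm{Hom}(M^{\otimes\bullet},A),d_T)$.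 An order $N$ deformation of $T$ is $T_t=\sum_{i=0}^Nt^iT_i$ with $T_0=T$ such that $T_k(u^* )=T_k(u)^*$ and $\sum_{i+j=k}T_i(u)T_j(v)=\sum_{i+j=k}T_i(uT_j(v)+T_j(u)v)$ for $k=0,\ldots,N$. It extends to next order if there is $T_{N+1}\in i\mathrm{Hom}(M,A)$ making $T_t+t^{N+1}T_{N+1}$ an order $N+1$ deformation. *)

theory Defs
  imports Main "HOL.Vector_Spaces"
begin

text \<open>The algebra A is a type 'a of class ring (associative, not
necessarily unital) with a k-vector space structure scaleA; the bimodule M is a
type 'm with k-vector space structure scaleM, left action lact and right action ract.\<close>

definition sgnp :: "int \<Rightarrow> 'a::ab_group_add \<Rightarrow> 'a" where
  "sgnp e x = (if even e then x else - x)"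

definition involutive_algebra ::
  "('k::field \<Rightarrow> 'a::ring \<Rightarrow> 'a) \<Rightarrow> ('a \<Rightarrow> 'a) \<Rightarrow> bool" where
  "involutive_algebra scaleA starA \<longleftrightarrow>
     vector_space scaleA \<and>
     (\<forall>c a b. scaleA c (a * b) = scaleA c a * b \<and> scaleA c (a * b) = a * scaleA c b) \<and>
     Vector_Spaces.linear scaleA scaleA starA \<and>
     (\<forall>a. starA (starA a) = a) \<and>
     (\<forall>a b. starA (a * b) = starA b * starA a)"

definition involutive_bimodule ::
  "('k::field \<Rightarrow> 'a::ring \<Rightarrow> 'a) \<Rightarrow> ('a \<Rightarrow> 'a) \<Rightarrow>
   ('k \<Rightarrow> 'm::ab_group_add \<Rightarrow> 'm) \<Rightarrow> ('a \<Rightarrow> 'm \<Rightarrow> 'm) \<Rightarrow> ('m \<Rightarrow> 'a \<Rightarrow> 'm) \<Rightarrow> ('m \<Rightarrow> 'm) \<Rightarrow> bool" where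
  "involutive_bimodule scaleA starA scaleM lact ract starM \<longleftrightarrow>
     vector_space scaleM \<and>
     \<comment> \<open>bilinearity of the actions\<close>
     (\<forall>c a b u. lact (scaleA c a + b) u = scaleM c (lact a u) + lact b u) \<and>
     (\<forall>c a u v. lact a (scaleM c u + v) = scaleM c (lact a u) + lact a v) \<and>
     (\<forall>c a b u. ract u (scaleA c a + b) = scaleM c (ract u a) + ract u b) \<and>
     (\<forall>c a u v. ract (scaleM c u + v) a = scaleM c (ract u a) + ract v a) \<and>
     \<comment> \<open>bimodule axioms\<close>
     (\<forall>a b u. lact (a * b) u = lact a (lact b u)) \<and>
     (\<forall>a b u. ract u (a * b) = ract (ract u a) b) \<and>
     (\<forall>a b u. ract (lact a u) b = lact a (ract u b)) \<and>
     \<comment> \<open>involution\<close>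
     Vector_Spaces.linear scaleM scaleM starM \<and>
     (\<forall>u. starM (starM u) = u) \<and>
     (\<forall>a u. starM (lact a u) = ract (starM u) (starA a)) \<and>
     (\<forall>a u. starM (ract u a) = lact (starA a) (starM u))"

definition rel_RB ::
  "('k::field \<Rightarrow> 'a::ring \<Rightarrow> 'a) \<Rightarrow> ('a \<Rightarrow> 'a) \<Rightarrow>
   ('k \<Rightarrow> 'm::ab_group_add \<Rightarrow> 'm) \<Rightarrow> ('a \<Rightarrow> 'm \<Rightarrow> 'm) \<Rightarrow> ('m \<Rightarrow> 'a \<Rightarrow> 'm) \<Rightarrow> ('m \<Rightarrow> 'm) \<Rightarrow>
   ('m \<Rightarrow> 'a) \<Rightarrow> bool" where
  "rel_RB scaleA starA scaleM lact ract starM T \<longleftrightarrow>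
     Vector_Spaces.linear scaleM scaleA T \<and>
     (\<forall>u. T (starM u) = starA (T u)) \<and>
     (\<forall>u v. T u * T v = T (ract u (T v) + lact (T u) v))"

definition circT :: "('a \<Rightarrow> 'm \<Rightarrow> 'm::ab_group_add) \<Rightarrow> ('m \<Rightarrow> 'a \<Rightarrow> 'm) \<Rightarrow> ('m \<Rightarrow> 'a) \<Rightarrow> 'm \<Rightarrow> 'm \<Rightarrow> 'm" where
  "circT lact ract T u v = ract u (T v) + lact (T u) v"

definition lT :: "('a \<Rightarrow> 'm \<Rightarrow> 'm) \<Rightarrow> ('m \<Rightarrow> 'a \<Rightarrow> 'm) \<Rightarrow> ('m \<Rightarrow> 'a::ring) \<Rightarrow> 'm \<Rightarrow> 'a \<Rightarrow> 'a" where
  "lT lact ract T u a = T u * a - T (ract u a)"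

definition rT :: "('a \<Rightarrow> 'm \<Rightarrow> 'm) \<Rightarrow> ('m \<Rightarrow> 'a \<Rightarrow> 'm) \<Rightarrow> ('m \<Rightarrow> 'a::ring) \<Rightarrow> 'a \<Rightarrow> 'm \<Rightarrow> 'a" where
  "rT lact ract T a u = a * T u - T (lact a u)"

text \<open>n-cochains: maps on lists of length n (value 0 on lists of other lengths),
k-linear in each argument (i.e. linear maps on M^{\<otimes>n}), with the involution
condition. For n = 0 this is the set of a = f [] with a* = -a (sign exponent 1).\<close>
definition iHom ::
  "('k::field \<Rightarrow> 'a::ring \<Rightarrow> 'a) \<Rightarrow> ('a \<Rightarrow> 'a) \<Rightarrow> ('k \<Rightarrow> 'm::ab_group_add \<Rightarrow> 'm) \<Rightarrow> ('m \<Rightarrow> 'm) \<Rightarrow>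
   nat \<Rightarrow> ('m list \<Rightarrow> 'a) set" where
  "iHom scaleA starA scaleM starM n =
     {f. (\<forall>xs. length xs \<noteq> n \<longrightarrow> f xs = 0) \<and>
         (\<forall>xs ys c u v. length xs + length ys + 1 = n \<longrightarrow>
             f (xs @ [scaleM c u + v] @ ys) = scaleA c (f (xs @ [u] @ ys)) + f (xs @ [v] @ ys)) \<and>
         (\<forall>xs. length xs = n \<longrightarrow>
             starA (f xs) = sgnp (((int n - 1) * (int n - 2)) div 2) (f (rev (map starM xs))))}"

definition dT ::
  "('a \<Rightarrow> 'm \<Rightarrow> 'm::ab_group_add) \<Rightarrow> ('m \<Rightarrow> 'a \<Rightarrow> 'm) \<Rightarrow> ('m \<Rightarrow> 'a::ring) \<Rightarrow> nat \<Rightarrow>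
   ('m list \<Rightarrow> 'a) \<Rightarrow> ('m list \<Rightarrow> 'a)" where
  "dT lact ract T n f xs =
     (if length xs \<noteq> n + 1 then 0
      else if n = 0 then lT lact ract T (xs ! 0) (f []) - rT lact ract T (f []) (xs ! 0)
      else sgnp (int n)
        (lT lact ract T (hd xs) (f (tl xs))
         + (\<Sum>i = 1..n. sgnp (int i)
              (f (take (i - 1) xs @ [circT lact ract T (xs ! (i - 1)) (xs ! i)] @ drop (i + 1) xs)))
         + sgnp (int n + 1) (rT lact ract T (f (take n xs)) (xs ! n))))"

definition iH_vanishes ::
  "('k::field \<Rightarrow> 'a::ring \<Rightarrow> 'a) \<Rightarrow> ('a \<Rightarrow> 'a) \<Rightarrow> ('k \<Rightarrow> 'm::ab_group_add \<Rightarrow> 'm) \<Rightarrow>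
   ('a \<Rightarrow> 'm \<Rightarrow> 'm) \<Rightarrow> ('m \<Rightarrow> 'a \<Rightarrow> 'm) \<Rightarrow> ('m \<Rightarrow> 'm) \<Rightarrow> ('m \<Rightarrow> 'a) \<Rightarrow> nat \<Rightarrow> bool" where
  "iH_vanishes scaleA starA scaleM lact ract starM T n \<longleftrightarrow>
     (\<forall>f \<in> iHom scaleA starA scaleM starM n. (\<forall>xs. dT lact ract T n f xs = 0) \<longrightarrow>
        (if n = 0 then (\<forall>xs. f xs = 0)
         else (\<exists>g \<in> iHom scaleA starA scaleM starM (n - 1). dT lact ract T (n - 1) g = f)))"

text \<open>Order N deformation T_t = \<Sum>_{i\<le>N} t^i T_i, given by its coefficients Ts i (i \<le> N).\<close>
definition is_deformation ::
  "('k::field \<Rightarrow> 'a::ring \<Rightarrow> 'a) \<Rightarrow> ('a \<Rightarrow> 'a) \<Rightarrow> ('k \<Rightarrow> 'm::ab_group_add \<Rightarrow> 'm) \<Rightarrow>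
   ('a \<Rightarrow> 'm \<Rightarrow> 'm) \<Rightarrow> ('m \<Rightarrow> 'a \<Rightarrow> 'm) \<Rightarrow> ('m \<Rightarrow> 'm) \<Rightarrow> ('m \<Rightarrow> 'a) \<Rightarrow>
   nat \<Rightarrow> (nat \<Rightarrow> 'm \<Rightarrow> 'a) \<Rightarrow> bool" where
  "is_deformation scaleA starA scaleM lact ract starM T N Ts \<longleftrightarrow>
     Ts 0 = T \<and>
     (\<forall>k \<le> N. Vector_Spaces.linear scaleM scaleA (Ts k) \<and> (\<forall>u. Ts k (starM u) = starA (Ts k u))) \<and>
     (\<forall>k \<le> N. \<forall>u v.
        (\<Sum>i \<le> k. Ts i u * Ts (k - i) v) =
        (\<Sum>i \<le> k. Ts i (ract u (Ts (k - i) v) + lact (Ts (k - i) u) v)))"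

end

(*
  The coefficient of t^(N+1) in T_t(u) T_t(v) - T_t(u T_t(v) + T_t(u) v), computed with
  T_(N+1) = 0, is a 2-cochain compatible with the involutions: the obstruction. A quadratic
  identity among all these defects shows that the obstruction is a d_T-cocycle as soon as
  the defects of order at most N vanish. Since iH^2_T(M,A) = 0 it equals d_T g for a
  1-cochain g, and replacing T_(N+1) = 0 by g subtracts exactly d_T g from the defect of
  order N+1, so T_(N+1) := g extends the deformation.
*)
theory Submission
  imports Defs
begin

definition weak_compositions3 :: "nat \<Rightarrow> (nat \<times> nat \<times> nat) set" where
  "weak_compositions3 n = {(x, y, z). x + y + z = n}"

lemma sum_nested_eq_sum_weak_compositions3_left:
  "(\<Sum>a\<le>n. \<Sum>p\<le>n - a. F a p (n - a - p)) = (\<Sum>(x, y, z)\<in>weak_compositions3 n. F x y z)"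
proof -
  have "(\<Sum>a\<le>n. \<Sum>p\<le>n - a. F a p (n - a - p))
      = (\<Sum>(a, p)\<in>Sigma {..n} (\<lambda>a. {..n - a}). F a p (n - a - p))"
    by (rule sum.Sigma) auto
  also have "\<dots> = (\<Sum>(x, y, z)\<in>weak_compositions3 n. F x y z)"
    by (rule sum.reindex_bij_witness[where i = "\<lambda>(x, y, z). (x, y)"
          and j = "\<lambda>(a, p). (a, p, n - a - p)"])
      (auto simp: weak_compositions3_def)
  finally show ?thesis .
qed

lemma sum_nested_eq_sum_weak_compositions3_right:
  "(\<Sum>a\<le>n. \<Sum>p\<le>a. F p (a - p) (n - a)) = (\<Sum>(x, y, z)\<in>weak_compositions3 n. F x y z)"
proof -
  have "(\<Sum>a\<le>n. \<Sum>p\<le>a. F p (a - p) (n - a))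
      = (\<Sum>(a, p)\<in>Sigma {..n} (\<lambda>a. {..a}). F p (a - p) (n - a))"
    by (rule sum.Sigma) auto
  also have "\<dots> = (\<Sum>(x, y, z)\<in>weak_compositions3 n. F x y z)"
    by (rule sum.reindex_bij_witness[where i = "\<lambda>(x, y, z). (x + y, x)"
          and j = "\<lambda>(a, p). (p, a - p, n - a)"])
      (auto simp: weak_compositions3_def)
  finally show ?thesis .
qed

lemma sum_weak_compositions3_swap:
  "(\<Sum>(x, y, z)\<in>weak_compositions3 n. F x y z) = (\<Sum>(x, y, z)\<in>weak_compositions3 n. F x z y)"
  by (rule sum.reindex_bij_witness[where i = "\<lambda>(x, y, z). (x, z, y)"
        and j = "\<lambda>(x, y, z). (x, z, y)"])
    (auto simp: weak_compositions3_def)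

definition binary_cochain :: "('m \<Rightarrow> 'm \<Rightarrow> 'a::zero) \<Rightarrow> 'm list \<Rightarrow> 'a" where
  "binary_cochain f xs = (if length xs = 2 then f (xs ! 0) (xs ! 1) else 0)"

lemma binary_cochain_in_iHom:
  fixes f :: "'m::ab_group_add \<Rightarrow> 'm \<Rightarrow> 'a::ring" and scaleA :: "'k::field \<Rightarrow> 'a \<Rightarrow> 'a"
  assumes "\<And>c x y z. f (scaleM c x + y) z = scaleA c (f x z) + f y z"
    and "\<And>c x y z. f z (scaleM c x + y) = scaleA c (f z x) + f z y"
    and "\<And>x y. starA (f x y) = f (starM y) (starM x)"
  shows "binary_cochain f \<in> iHom scaleA starA scaleM starM 2"
  unfolding iHom_def
proof (intro CollectI conjI allI impI)
  fix xs :: "'m list"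
  assume "length xs \<noteq> 2"
  then show "binary_cochain f xs = 0" by (simp add: binary_cochain_def)
next
  fix xs ys :: "'m list" and c u v
  assume "length xs + length ys + 1 = 2"
  then consider x where "xs = [x]" "ys = []" | y where "xs = []" "ys = [y]"
    by (cases xs; cases ys) auto
  then show "binary_cochain f (xs @ [scaleM c u + v] @ ys) =
      scaleA c (binary_cochain f (xs @ [u] @ ys)) + binary_cochain f (xs @ [v] @ ys)"
    by cases (simp_all add: binary_cochain_def assms(1,2))
next
  fix xs :: "'m list"
  assume "length xs = 2"
  then obtain x y where "xs = [x, y]" by (cases xs; cases "tl xs") auto
  then show "starA (binary_cochain f xs) =
      sgnp ((int 2 - 1) * (int 2 - 2) div 2) (binary_cochain f (rev (map starM xs)))"
    by (simp add: binary_cochain_def sgnp_def assms(3))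
qed

lemma dT_1_pair:
  "dT lact ract T 1 g [u, v] =
     g [circT lact ract T u v] - lT lact ract T u (g [v]) - rT lact ract T (g [u]) v"
  by (simp add: dT_def sgnp_def)

lemma dT_2_triple:
  "dT lact ract T 2 f [u, v, w] =
     lT lact ract T u (f [v, w]) - f [circT lact ract T u v, w] + f [u, circT lact ract T v w]
     - rT lact ract T (f [u, v]) w"
proof -
  have "{1..2::nat} = {1, 2}" by auto
  then show ?thesis by (simp add: dT_def sgnp_def numeral_2_eq_2)
qed

text \<open>The coefficient of \<open>t\<^sup>k\<close> in \<open>T\<^sub>t(u) T\<^sub>t(v) - T\<^sub>t(u T\<^sub>t(v) + T\<^sub>t(u) v)\<close>.\<close>
definition deformation_defect ::
  "('a::ring \<Rightarrow> 'm::ab_group_add \<Rightarrow> 'm) \<Rightarrow> ('m \<Rightarrow> 'a \<Rightarrow> 'm) \<Rightarrow> (nat \<Rightarrow> 'm \<Rightarrow> 'a) \<Rightarrow> nat \<Rightarrow> 'm \<Rightarrow> 'm \<Rightarrow> 'a"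
  where "deformation_defect lact ract Ts k u v =
    (\<Sum>p\<le>k. Ts p u * Ts (k - p) v - Ts p (circT lact ract (Ts (k - p)) u v))"

lemma deformation_defect_cong:
  assumes "\<And>i. i \<le> k \<Longrightarrow> Ts i = Ts' i"
  shows "deformation_defect lact ract Ts k = deformation_defect lact ract Ts' k"
  using assms by (intro ext) (simp add: deformation_defect_def)

lemma is_deformation_iff_defect:
  "is_deformation scaleA starA scaleM lact ract starM T N Ts \<longleftrightarrow>
     Ts 0 = T \<and>
     (\<forall>k\<le>N. Vector_Spaces.linear scaleM scaleA (Ts k) \<and> (\<forall>u. Ts k (starM u) = starA (Ts k u))) \<and>
     (\<forall>k\<le>N. \<forall>u v. deformation_defect lact ract Ts k u v = 0)"
  by (simp add: is_deformation_def deformation_defect_def circT_def sum_subtractf)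

definition truncate :: "nat \<Rightarrow> (nat \<Rightarrow> 'm \<Rightarrow> 'a::zero) \<Rightarrow> nat \<Rightarrow> 'm \<Rightarrow> 'a" where
  "truncate N Ts i = (if i \<le> N then Ts i else (\<lambda>_. 0))"

text \<open>Truncating also makes every
  coefficient additive, as the defect identity requires; the coefficients of an order \<open>N\<close>
  deformation beyond \<open>N\<close> are unconstrained.\<close>
definition deformation_obstruction ::
  "('a::ring \<Rightarrow> 'm::ab_group_add \<Rightarrow> 'm) \<Rightarrow> ('m \<Rightarrow> 'a \<Rightarrow> 'm) \<Rightarrow> nat \<Rightarrow> (nat \<Rightarrow> 'm \<Rightarrow> 'a) \<Rightarrow> 'm list \<Rightarrow> 'a"
  where "deformation_obstruction lact ract N Ts =
    binary_cochain (deformation_defect lact ract (truncate N Ts) (Suc N))"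

lemma linear_imp_additive: "Vector_Spaces.linear s1 s2 f \<Longrightarrow> additive f"
  by (simp add: linear_iff additive_def)

locale additive_bimodule =
  fixes lact :: "'a::ring \<Rightarrow> 'm::ab_group_add \<Rightarrow> 'm" and ract :: "'m \<Rightarrow> 'a \<Rightarrow> 'm"
  assumes lact_add_left: "lact (a + b) u = lact a u + lact b u"
    and lact_add_right: "lact a (u + v) = lact a u + lact a v"
    and ract_add_left: "ract (u + v) a = ract u a + ract v a"
    and ract_add_right: "ract u (a + b) = ract u a + ract u b"
    and lact_mult: "lact (a * b) u = lact a (lact b u)"
    and ract_mult: "ract u (a * b) = ract (ract u a) b"
    and ract_lact: "ract (lact a u) b = lact a (ract u b)"
begin

lemma additive_lact_left: "additive (\<lambda>a. lact a u)"
  by unfold_locales (rule lact_add_left)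

lemma additive_lact_right: "additive (lact a)"
  by unfold_locales (rule lact_add_right)

lemma additive_ract_left: "additive (\<lambda>u. ract u a)"
  by unfold_locales (rule ract_add_left)

lemma additive_ract_right: "additive (ract u)"
  by unfold_locales (rule ract_add_right)

lemmas action_additive_simps =
  lact_add_left lact_add_right ract_add_left ract_add_right
  additive.zero[OF additive_lact_left] additive.minus[OF additive_lact_left]
  additive.diff[OF additive_lact_left] additive.sum[OF additive_lact_left]
  additive.zero[OF additive_lact_right] additive.minus[OF additive_lact_right]
  additive.diff[OF additive_lact_right] additive.sum[OF additive_lact_right]
  additive.zero[OF additive_ract_left] additive.minus[OF additive_ract_left]
  additive.diff[OF additive_ract_left] additive.sum[OF additive_ract_left]
  additive.zero[OF additive_ract_right] additive.minus[OF additive_ract_right]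
  additive.diff[OF additive_ract_right] additive.sum[OF additive_ract_right]

abbreviation defect :: "(nat \<Rightarrow> 'm \<Rightarrow> 'a) \<Rightarrow> nat \<Rightarrow> 'm \<Rightarrow> 'm \<Rightarrow> 'a" where
  "defect \<equiv> deformation_defect lact ract"

abbreviation circ :: "('m \<Rightarrow> 'a) \<Rightarrow> 'm \<Rightarrow> 'm \<Rightarrow> 'm" where
  "circ \<equiv> circT lact ract"

text \<open>Expanding every defect turns each of the six sums into a sum over the triples
  \<open>(x, y, z)\<close> with \<open>x + y + z = n\<close>; after exchanging \<open>y\<close> and \<open>z\<close> in one of them,
  the summands cancel termwise by associativity and the bimodule laws.\<close>
lemma defect_identity:
  assumes additive: "\<And>i. additive (Ts i)"
  shows "(\<Sum>a\<le>n. Ts a u * defect Ts (n - a) v w - defect Ts a (circ (Ts (n - a)) u v) w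
      + defect Ts a u (circ (Ts (n - a)) v w) - defect Ts a u v * Ts (n - a) w
      - Ts a (ract u (defect Ts (n - a) v w)) + Ts a (lact (defect Ts (n - a) u v) w)) = 0"
proof -
  note Ts_simps = additive.add[OF additive] additive.zero[OF additive] additive.minus[OF additive]
    additive.diff[OF additive] additive.sum[OF additive]
  define F1 where "F1 x y z = Ts x u * (Ts y v * Ts z w - Ts y (circ (Ts z) v w))" for x y z
  define F2 where
    "F2 x y z = Ts x (circ (Ts z) u v) * Ts y w - Ts x (ract (circ (Ts z) u v) (Ts y w))" for x y z
  define F3 where "F3 x y z = Ts x (lact (Ts y (circ (Ts z) u v)) w)" for x y z
  define F4 where
    "F4 x y z = Ts x u * Ts y (circ (Ts z) v w) - Ts x (circ (Ts y) u (circ (Ts z) v w))" for x y z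
  define F5 where "F5 x y z = (Ts x u * Ts y v - Ts x (circ (Ts y) u v)) * Ts z w" for x y z
  define F6 where "F6 x y z = Ts x (ract u (Ts y v * Ts z w - Ts y (circ (Ts z) v w)))" for x y z
  define F7 where "F7 x y z = Ts x (lact (Ts y u * Ts z v - Ts y (circ (Ts z) u v)) w)" for x y z
  let ?S = "\<lambda>F. \<Sum>(x, y, z)\<in>weak_compositions3 n. F x y z"
  have s1: "(\<Sum>a\<le>n. Ts a u * defect Ts (n - a) v w) = ?S F1"
    unfolding sum_nested_eq_sum_weak_compositions3_left[symmetric]
    by (simp add: deformation_defect_def F1_def sum_distrib_left)
  have s2: "(\<Sum>a\<le>n. defect Ts a (circ (Ts (n - a)) u v) w) = ?S F2 - ?S F3"
    unfolding sum_nested_eq_sum_weak_compositions3_right[symmetric] sum_subtractf[symmetric]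
    by (simp add: deformation_defect_def F2_def F3_def circT_def Ts_simps diff_diff_eq)
  have s3: "(\<Sum>a\<le>n. defect Ts a u (circ (Ts (n - a)) v w)) = ?S F4"
    unfolding sum_nested_eq_sum_weak_compositions3_right[symmetric]
    by (simp add: deformation_defect_def F4_def)
  have s4: "(\<Sum>a\<le>n. defect Ts a u v * Ts (n - a) w) = ?S F5"
    unfolding sum_nested_eq_sum_weak_compositions3_right[symmetric]
    by (simp add: deformation_defect_def F5_def sum_distrib_right)
  have s5: "(\<Sum>a\<le>n. Ts a (ract u (defect Ts (n - a) v w))) = ?S F6"
    unfolding sum_nested_eq_sum_weak_compositions3_left[symmetric]
    by (simp add: deformation_defect_def F6_def action_additive_simps Ts_simps)
  have s6: "(\<Sum>a\<le>n. Ts a (lact (defect Ts (n - a) u v) w)) = ?S F7"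
    unfolding sum_nested_eq_sum_weak_compositions3_left[symmetric]
    by (simp add: deformation_defect_def F7_def action_additive_simps Ts_simps)
  have "(\<Sum>a\<le>n. Ts a u * defect Ts (n - a) v w - defect Ts a (circ (Ts (n - a)) u v) w
      + defect Ts a u (circ (Ts (n - a)) v w) - defect Ts a u v * Ts (n - a) w
      - Ts a (ract u (defect Ts (n - a) v w)) + Ts a (lact (defect Ts (n - a) u v) w))
    = ?S F1 - (?S (\<lambda>x y z. F2 x z y) - ?S F3) + ?S F4 - ?S F5 - ?S F6 + ?S F7"
    unfolding s1[symmetric] s2[symmetric] s3[symmetric] s4[symmetric] s5[symmetric] s6[symmetric]
      sum_weak_compositions3_swap[of F2, symmetric]
    by (simp add: sum.distrib sum_subtractf)
  also have "\<dots> = (\<Sum>(x, y, z)\<in>weak_compositions3 n.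
      F1 x y z - (F2 x z y - F3 x y z) + F4 x y z - F5 x y z - F6 x y z + F7 x y z)"
    by (simp add: sum.distrib sum_subtractf split_beta)
  also have "\<dots> = 0"
    by (rule sum.neutral, clarify)
      (simp add: F1_def F2_def F3_def F4_def F5_def F6_def F7_def circT_def action_additive_simps
        Ts_simps ract_mult[symmetric] lact_mult[symmetric] ract_lact algebra_simps)
  finally show ?thesis .
qed

text \<open>Only the terms \<open>a = 0\<close> and \<open>a = n\<close> of the defect identity survive.\<close>
lemma dT_lowest_defect_eq_0:
  assumes additive: "\<And>i. additive (Ts i)" and "0 < n"
    and lower: "\<And>k u v. k < n \<Longrightarrow> defect Ts k u v = 0"
  shows "dT lact ract (Ts 0) 2 (binary_cochain (defect Ts n)) xs = 0"
proof (cases "length xs = 3")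
  case False
  then show ?thesis by (simp add: dT_def)
next
  case True
  then obtain u v w where xs: "xs = [u, v, w]"
    by (cases xs; cases "tl xs"; cases "tl (tl xs)") auto
  note Ts_simps = additive.add[OF additive] additive.zero[OF additive]
  define f where "f a = Ts a u * defect Ts (n - a) v w - defect Ts a (circ (Ts (n - a)) u v) w
      + defect Ts a u (circ (Ts (n - a)) v w) - defect Ts a u v * Ts (n - a) w
      - Ts a (ract u (defect Ts (n - a) v w)) + Ts a (lact (defect Ts (n - a) u v) w)" for a
  have "0 = sum f {..n}"
    unfolding f_def by (rule defect_identity[symmetric]) (rule additive)
  also have "\<dots> = sum f {0, n}"
  proof (rule sum.mono_neutral_right)
    show "\<forall>i\<in>{..n} - {0, n}. f i = 0"
    proof
      fix i assume "i \<in> {..n} - {0, n}"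
      then have "i < n" "n - i < n" by auto
      then show "f i = 0" by (simp add: f_def lower Ts_simps action_additive_simps)
    qed
  qed auto
  also have "\<dots> = dT lact ract (Ts 0) 2 (binary_cochain (defect Ts n)) xs"
    using \<open>0 < n\<close>
    by (simp add: xs f_def dT_2_triple binary_cochain_def lower lT_def rT_def Ts_simps
        action_additive_simps)
  finally show ?thesis ..
qed

lemma defect_fun_upd_top:
  assumes "additive (Ts 0)" and "0 < n" and "Ts n = (\<lambda>_. 0)"
  shows "defect (Ts(n := \<lambda>u. g [u])) n u v = defect Ts n u v - dT lact ract (Ts 0) 1 g [u, v]"
proof -
  have split: "(\<Sum>p\<le>n. F p) = F 0 + F n + (\<Sum>p\<in>{1..<n}. F p)" for F :: "nat \<Rightarrow> 'a"
  proof -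
    have "{..n} = insert 0 (insert n {1..<n})" using \<open>0 < n\<close> by auto
    then show ?thesis using \<open>0 < n\<close> by (simp add: add.assoc)
  qed
  have middle: "(\<Sum>p\<in>{1..<n}. (Ts(n := S)) p u * (Ts(n := S)) (n - p) v
      - (Ts(n := S)) p (circ ((Ts(n := S)) (n - p)) u v))
    = (\<Sum>p\<in>{1..<n}. Ts p u * Ts (n - p) v - Ts p (circ (Ts (n - p)) u v))" for S
    by (rule sum.cong) auto
  show ?thesis
    unfolding deformation_defect_def split middle dT_1_pair
    using assms by (simp add: lT_def rT_def circT_def additive.add[OF assms(1)]
        additive.zero[OF assms(1)] action_additive_simps algebra_simps)
qed

end

locale involutive_algebra_bimodule =
  fixes scaleA :: "'k::field \<Rightarrow> 'a::ring \<Rightarrow> 'a" and starA :: "'a \<Rightarrow> 'a"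
    and scaleM :: "'k \<Rightarrow> 'm::ab_group_add \<Rightarrow> 'm"
    and lact :: "'a \<Rightarrow> 'm \<Rightarrow> 'm" and ract :: "'m \<Rightarrow> 'a \<Rightarrow> 'm" and starM :: "'m \<Rightarrow> 'm"
  assumes algebra: "involutive_algebra scaleA starA"
    and bimodule: "involutive_bimodule scaleA starA scaleM lact ract starM"
begin

sublocale A: vector_space scaleA
  using algebra by (simp add: involutive_algebra_def)

sublocale M: vector_space scaleM
  using bimodule by (simp add: involutive_bimodule_def)

sublocale starA: Vector_Spaces.linear scaleA scaleA starA
  using algebra by (simp add: involutive_algebra_def)

sublocale starM: Vector_Spaces.linear scaleM scaleM starM
  using bimodule by (simp add: involutive_bimodule_def)

lemma scaleA_mult_left: "scaleA c a * b = scaleA c (a * b)"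
  and scaleA_mult_right: "a * scaleA c b = scaleA c (a * b)"
  and starA_mult: "starA (a * b) = starA b * starA a"
  using algebra unfolding involutive_algebra_def by metis+

lemma lact_linear_left: "lact (scaleA c a + b) u = scaleM c (lact a u) + lact b u"
  and lact_linear_right: "lact a (scaleM c u + v) = scaleM c (lact a u) + lact a v"
  and ract_linear_left: "ract (scaleM c u + v) a = scaleM c (ract u a) + ract v a"
  and ract_linear_right: "ract u (scaleA c a + b) = scaleM c (ract u a) + ract u b"
  and starM_lact: "starM (lact a u) = ract (starM u) (starA a)"
  and starM_ract: "starM (ract u a) = lact (starA a) (starM u)"
  using bimodule by (simp_all add: involutive_bimodule_def)

sublocale additive_bimodule lact ract
proof
  show "lact (a + b) u = lact a u + lact b u" for a b u
    using lact_linear_left[of 1] by simp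
  show "lact a (u + v) = lact a u + lact a v" for a u v
    using lact_linear_right[of a 1] by simp
  show "ract (u + v) a = ract u a + ract v a" for u v a
    using ract_linear_left[of 1] by simp
  show "ract u (a + b) = ract u a + ract u b" for u a b
    using ract_linear_right[of u 1] by simp
qed (use bimodule in \<open>simp_all add: involutive_bimodule_def\<close>)

lemma lact_scale_left: "lact (scaleA c a) u = scaleM c (lact a u)"
  using lact_linear_left[of c a 0] by (simp add: action_additive_simps)

lemma lact_scale_right: "lact a (scaleM c u) = scaleM c (lact a u)"
  using lact_linear_right[of a c u 0] by (simp add: action_additive_simps)

lemma ract_scale_left: "ract (scaleM c u) a = scaleM c (ract u a)"
  using ract_linear_left[of c u 0] by (simp add: action_additive_simps)

lemma ract_scale_right: "ract u (scaleA c a) = scaleM c (ract u a)"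
  using ract_linear_right[of u c a 0] by (simp add: action_additive_simps)

sublocale MA: vector_space_pair scaleM scaleA ..

lemma iHom_1_linear:
  assumes "g \<in> iHom scaleA starA scaleM starM 1"
  shows "Vector_Spaces.linear scaleM scaleA (\<lambda>u. g [u])"
proof -
  have g_linear: "g [scaleM c u + v] = scaleA c (g [u]) + g [v]" for c u v
    using assms unfolding iHom_def by (force dest: spec[of _ "[]"])
  have "g [0] = 0"
    using g_linear[of 1 0 0] by simp
  then show ?thesis
    unfolding linear_iff using g_linear[of 1] g_linear[of _ _ 0]
    by (simp add: A.vector_space_axioms M.vector_space_axioms)
qed

lemma iHom_1_star:
  assumes "g \<in> iHom scaleA starA scaleM starM 1"
  shows "g [starM u] = starA (g [u])"
  using assms by (simp add: iHom_def sgnp_def)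

context
  fixes Ts :: "nat \<Rightarrow> 'm \<Rightarrow> 'a" and k :: nat
  assumes Ts_linear: "\<And>i. i \<le> k \<Longrightarrow> Vector_Spaces.linear scaleM scaleA (Ts i)"
begin

private lemma Ts_add: "i \<le> k \<Longrightarrow> Ts i (u + v) = Ts i u + Ts i v"
  and Ts_scale: "i \<le> k \<Longrightarrow> Ts i (scaleM c u) = scaleA c (Ts i u)"
  using Ts_linear by (simp_all add: linear_iff)

lemma defect_linear_left:
  "defect Ts k (scaleM c x + y) z = scaleA c (defect Ts k x z) + defect Ts k y z"
  unfolding deformation_defect_def A.scale_sum_right sum.distrib[symmetric]
  by (intro sum.cong refl)
    (simp add: circT_def Ts_add Ts_scale action_additive_simps lact_scale_left ract_scale_left
      A.scale_right_distrib A.scale_right_diff_distrib scaleA_mult_left algebra_simps)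

lemma defect_linear_right:
  "defect Ts k z (scaleM c x + y) = scaleA c (defect Ts k z x) + defect Ts k z y"
  unfolding deformation_defect_def A.scale_sum_right sum.distrib[symmetric]
  by (intro sum.cong refl)
    (simp add: circT_def Ts_add Ts_scale action_additive_simps lact_scale_right ract_scale_right
      A.scale_right_distrib A.scale_right_diff_distrib scaleA_mult_right algebra_simps)

lemma defect_star:
  assumes "\<And>i u. i \<le> k \<Longrightarrow> Ts i (starM u) = starA (Ts i u)"
  shows "starA (defect Ts k x y) = defect Ts k (starM y) (starM x)"
proof -
  have "starA (defect Ts k x y) = (\<Sum>p\<le>k. Ts (k - p) (starM y) * Ts p (starM x))
      - (\<Sum>p\<le>k. Ts p (circ (Ts (k - p)) (starM y) (starM x)))"
    unfolding deformation_defect_def starA.sum sum_subtractf[symmetric]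
    by (intro sum.cong refl)
      (simp add: starA.diff starA.add starA_mult circT_def starM.add starM_lact starM_ract Ts_add
        assms[symmetric] add.commute)
  also have "(\<Sum>p\<le>k. Ts (k - p) (starM y) * Ts p (starM x))
      = (\<Sum>p\<le>k. Ts p (starM y) * Ts (k - p) (starM x))"
    by (rule sum.reindex_bij_witness[where i = "\<lambda>p. k - p" and j = "\<lambda>p. k - p"]) auto
  finally show ?thesis
    unfolding deformation_defect_def sum_subtractf .
qed

end

context
  fixes T :: "'m \<Rightarrow> 'a" and N :: nat and Ts :: "nat \<Rightarrow> 'm \<Rightarrow> 'a"
  assumes deformation: "is_deformation scaleA starA scaleM lact ract starM T N Ts"
begin

lemma truncate_linear: "Vector_Spaces.linear scaleM scaleA (truncate N Ts i)"
  using deformation by (simp add: truncate_def is_deformation_iff_defect MA.linear_zero)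

lemma truncate_star: "truncate N Ts i (starM u) = starA (truncate N Ts i u)"
  using deformation by (simp add: truncate_def is_deformation_iff_defect)

lemma truncate_0: "truncate N Ts 0 = T"
  using deformation by (simp add: truncate_def is_deformation_iff_defect)

lemma deformation_obstruction_in_iHom:
  "deformation_obstruction lact ract N Ts \<in> iHom scaleA starA scaleM starM 2"
  unfolding deformation_obstruction_def
  by (rule binary_cochain_in_iHom)
    (simp_all add: defect_linear_left defect_linear_right defect_star truncate_linear truncate_star)

lemma deformation_obstruction_cocycle:
  "dT lact ract T 2 (deformation_obstruction lact ract N Ts) xs = 0"
proof -
  have "defect (truncate N Ts) k u v = 0" if "k < Suc N" for k u v
  proof -
    have "defect (truncate N Ts) k = defect Ts k"
      using that by (intro deformation_defect_cong) (simp add: truncate_def)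
    then show ?thesis
      using that deformation by (simp add: is_deformation_iff_defect)
  qed
  then show ?thesis
    unfolding deformation_obstruction_def truncate_0[symmetric]
    using dT_lowest_defect_eq_0 linear_imp_additive[OF truncate_linear] by simp
qed

lemma deformation_extension:
  assumes g: "g \<in> iHom scaleA starA scaleM starM 1"
    and dg: "dT lact ract T 1 g = deformation_obstruction lact ract N Ts"
  shows "is_deformation scaleA starA scaleM lact ract starM T (Suc N) (Ts(Suc N := \<lambda>u. g [u]))"
  unfolding is_deformation_iff_defect
proof (intro conjI allI impI)
  show "(Ts(Suc N := \<lambda>u. g [u])) 0 = T"
    using deformation by (simp add: is_deformation_iff_defect)
next
  fix k u assume "k \<le> Suc N"
  then show "Vector_Spaces.linear scaleM scaleA ((Ts(Suc N := \<lambda>u. g [u])) k)"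
    and "(Ts(Suc N := \<lambda>u. g [u])) k (starM u) = starA ((Ts(Suc N := \<lambda>u. g [u])) k u)"
    using deformation iHom_1_linear[OF g] iHom_1_star[OF g]
    by (auto simp: is_deformation_iff_defect le_Suc_eq)
next
  fix k u v assume "k \<le> Suc N"
  then consider "k \<le> N" | "k = Suc N" by linarith
  then show "defect (Ts(Suc N := \<lambda>u. g [u])) k u v = 0"
  proof cases
    case 1
    then have "defect (Ts(Suc N := \<lambda>u. g [u])) k = defect Ts k"
      by (intro deformation_defect_cong) simp
    then show ?thesis
      using 1 deformation by (simp add: is_deformation_iff_defect)
  next
    case 2
    have "defect (Ts(Suc N := \<lambda>u. g [u])) (Suc N) u v
        = defect ((truncate N Ts)(Suc N := \<lambda>u. g [u])) (Suc N) u v"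
      by (subst deformation_defect_cong[where Ts' = "(truncate N Ts)(Suc N := \<lambda>u. g [u])"])
        (simp_all add: truncate_def)
    also have "\<dots> = defect (truncate N Ts) (Suc N) u v - dT lact ract T 1 g [u, v]"
      unfolding truncate_0[symmetric]
      by (rule defect_fun_upd_top[OF linear_imp_additive[OF truncate_linear]])
        (simp_all add: truncate_def)
    also have "\<dots> = 0"
      using dg by (simp add: deformation_obstruction_def binary_cochain_def)
    finally show ?thesis
      using 2 by simp
  qed
qed

end

end

theorem mainTheorem8:
  fixes scaleA :: "'k::field \<Rightarrow> 'a::ring \<Rightarrow> 'a"
    and starA :: "'a \<Rightarrow> 'a"
    and scaleM :: "'k \<Rightarrow> 'm::ab_group_add \<Rightarrow> 'm"
    and lact :: "'a \<Rightarrow> 'm \<Rightarrow> 'm" and ract :: "'m \<Rightarrow> 'a \<Rightarrow> 'm"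
    and starM :: "'m \<Rightarrow> 'm"
    and T :: "'m \<Rightarrow> 'a"
    and N :: nat and Ts :: "nat \<Rightarrow> 'm \<Rightarrow> 'a"
  assumes "involutive_algebra scaleA starA"
    and "involutive_bimodule scaleA starA scaleM lact ract starM"
    and "rel_RB scaleA starA scaleM lact ract starM T"
    and "iH_vanishes scaleA starA scaleM lact ract starM T 2"
    and "is_deformation scaleA starA scaleM lact ract starM T N Ts"
  shows "\<exists>S. Vector_Spaces.linear scaleM scaleA S \<and> (\<forall>u. S (starM u) = starA (S u)) \<and>
             is_deformation scaleA starA scaleM lact ract starM T (N + 1) (Ts(N + 1 := S))"
proof -
  interpret involutive_algebra_bimodule scaleA starA scaleM lact ract starM
    using assms(1,2) by unfold_locales
  obtain g where g: "g \<in> iHom scaleA starA scaleM starM 1"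
    and dg: "dT lact ract T 1 g = deformation_obstruction lact ract N Ts"
    using assms(4) deformation_obstruction_in_iHom[OF assms(5)]
      deformation_obstruction_cocycle[OF assms(5)]
    unfolding iH_vanishes_def by fastforce
  show ?thesis
    using iHom_1_linear[OF g] iHom_1_star[OF g] deformation_extension[OF assms(5) g dg] by auto
qed

end
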